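(* The law $\mathrm{x}\simeq \mathrm{y}\diamond(\mathrm{y}\diamond(\mathrm{x}\diamond\mathrm{y}))$ does not imply the law $\mathrm{x}\diamond(\mathrm{x}\diamond\mathrm{x})\simeq(\mathrm{x}\diamond\mathrm{x})\diamond\mathrm{x}$; that is, there exists a magma satisfying the first law but not the second.
   Context: A magma is a set with a binary operation $\diamond$; it satisfies a law if the identity holds for all assignments of the variables to elements of the magma. *)

theory Defs
  imports Main
begin

definition magma :: "'a set \<Rightarrow> ('a \<Rightarrow> 'a \<Rightarrow> 'a) \<Rightarrow> bool" where
  "magma M op \<longleftrightarrow> (\<forall>x\<in>M. \<forall>y\<in>M. op x y \<in> M)"

definition law1 :: "'a set \<Rightarrow> ('a \<Rightarrow> 'a \<Rightarrow> 'a) \<Rightarrow> bool" where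
  "law1 M op \<longleftrightarrow> (\<forall>x\<in>M. \<forall>y\<in>M. x = op y (op y (op x y)))"

definition law2 :: "'a set \<Rightarrow> ('a \<Rightarrow> 'a \<Rightarrow> 'a) \<Rightarrow> bool" where
  "law2 M op \<longleftrightarrow> (\<forall>x\<in>M. op x (op x x) = op (op x x) x)"

end

theory Submission
  imports Defs "HOL-Library.Countable"
begin

text \<open>The counterexample is a greedy free construction on binary trees over one generator.
  The law demands \<open>a \<diamondsuit> (a \<diamondsuit> (u \<diamondsuit> a)) = u\<close>; so \<open>a \<diamondsuit> b\<close> is defined to be \<open>u\<close> when
  \<open>b\<close> is the formal product \<open>Mul a c\<close> with \<open>c = u \<diamondsuit> a\<close>, and the formal tree \<open>Mul a b\<close>
  otherwise. The right quotient \<open>u\<close> is found by \<open>rdiv\<close>, by recursion on \<open>a\<close>. In a non-formal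
  product \<open>a \<diamondsuit> b\<close> the factor \<open>b\<close> is larger than \<open>a\<close>; this size bound shows that \<open>rdiv\<close> is
  exactly right division and that \<open>y \<diamondsuit> (x \<diamondsuit> y)\<close> is always formal, which yields the law.
  On the generator all products occurring in the second law are formal, hence distinct.\<close>

datatype fterm = Gen | Mul fterm fterm

instance fterm :: countable by countable_datatype

function (sequential) mul :: "fterm \<Rightarrow> fterm \<Rightarrow> fterm"
  and rdiv :: "fterm \<Rightarrow> fterm \<Rightarrow> fterm option" where
  "mul a (Mul a' c) =
     (if a' = a then (case rdiv a c of Some u \<Rightarrow> u | None \<Rightarrow> Mul a (Mul a' c))
      else Mul a (Mul a' c))"
| "mul a Gen = Mul a Gen"
| "rdiv Gen c = (case c of Mul u b \<Rightarrow> if b = Gen then Some u else None | Gen \<Rightarrow> None)"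
| "rdiv (Mul p q) c =
     (if mul c p = q then Some p
      else case c of Mul u b \<Rightarrow> if b = Mul p q \<and> mul u b = c then Some u else None | Gen \<Rightarrow> None)"
  by pat_completeness auto
termination
  by (relation "measure (case_sum (\<lambda>(a, b). size a + size b) (\<lambda>(a, c). size a + size c))") auto

lemma mul_formal_or_rdiv: "mul a b = Mul a b \<or> (\<exists>c. b = Mul a c \<and> rdiv a c = Some (mul a b))"
  by (cases b) (auto split: option.splits)

lemma size_lt_mul_or_right: "size a < size (mul a b) \<or> size a < size b"
  using mul_formal_or_rdiv[of a b] by auto

lemma rdiv_eq_Some_iff: "rdiv a c = Some u \<longleftrightarrow> mul u a = c"
proof (induction a arbitrary: u c)
  case Gen
  show ?case by (cases c) auto
next
  case (Mul p q)
  show ?case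
  proof
    assume rdiv: "rdiv (Mul p q) c = Some u"
    show "mul u (Mul p q) = c"
    proof (cases "mul c p = q")
      case True
      then have "rdiv p q = Some c" "u = p"
        using Mul.IH rdiv by auto
      then show ?thesis by simp
    next
      case False
      with rdiv show ?thesis by (cases c) (auto split: if_splits)
    qed
  next
    assume mul: "mul u (Mul p q) = c"
    show "rdiv (Mul p q) c = Some u"
    proof (cases "mul u (Mul p q) = Mul u (Mul p q)")
      case True
      have c: "c = Mul u (Mul p q)"
        using True mul by simp
      have "mul c p \<noteq> q"
        using size_lt_mul_or_right[of c p] c by auto
      with True show ?thesis
        unfolding c by (simp only: rdiv.simps fterm.case if_False if_True simp_thms)
    next
      case False
      then obtain t where "u = p" "rdiv p q = Some t" "c = t"
        using mul by (auto split: if_splits option.splits)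
      then show ?thesis using Mul.IH by simp
    qed
  qed
qed

lemma mul_formal_or_forced: "mul a b = Mul a b \<or> b = Mul a (mul (mul a b) a)"
  using mul_formal_or_rdiv[of a b] rdiv_eq_Some_iff by metis

lemma mul_neq_right: "mul a b \<noteq> b"
proof
  assume "mul a b = b"
  define c where "c = mul b a"
  have "b = Mul a c"
    using mul_formal_or_forced[of a b] \<open>mul a b = b\<close> c_def by auto
  then have "size b = size a + size c + 1"
    by simp
  moreover have "size b < size c \<or> size b < size a"
    using size_lt_mul_or_right[of b a] unfolding c_def .
  ultimately show False
    by linarith
qed

lemma mul_law: "mul y (mul y (mul x y)) = x"
proof -
  define w where "w = mul x y"
  have "mul y w = Mul y w"
  proof (rule ccontr)
    assume "mul y w \<noteq> Mul y w"
    then have w: "w = Mul y (mul (mul y w) y)"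
      using mul_formal_or_forced by metis
    consider "w = Mul x y" | "y = Mul x (mul w x)"
      using mul_formal_or_forced[of x y] w_def by auto
    then show False
    proof cases
      case 1
      then have "y = mul (mul y w) y"
        using w by (metis fterm.inject)
      then show False using mul_neq_right by metis
    next
      case 2
      have "size w = size y + size (mul (mul y w) y) + 1"
        using arg_cong[OF w, of size] by simp
      moreover have "size y = size x + size (mul w x) + 1"
        using arg_cong[OF 2, of size] by simp
      ultimately show False
        using size_lt_mul_or_right[of w x] by linarith
    qed
  qed
  moreover have "rdiv y w = Some x"
    using rdiv_eq_Some_iff w_def by simp
  ultimately show ?thesis
    unfolding w_def by simp
qed

lemma mul_Gen_not_flexible: "mul Gen (mul Gen Gen) \<noteq> mul (mul Gen Gen) Gen"
  by simp

definition nat_copy :: "('a::countable \<Rightarrow> 'a \<Rightarrow> 'a) \<Rightarrow> nat \<Rightarrow> nat \<Rightarrow> nat" where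
  "nat_copy f m n = to_nat (f (from_nat m) (from_nat n))"

lemma magma_nat_copy:
  fixes f :: "'a::countable \<Rightarrow> 'a \<Rightarrow> 'a"
  shows "magma (range (to_nat :: 'a \<Rightarrow> nat)) (nat_copy f)"
  by (auto simp: magma_def nat_copy_def intro: rangeI)

lemma law1_nat_copy:
  fixes f :: "'a::countable \<Rightarrow> 'a \<Rightarrow> 'a"
  shows "law1 (range (to_nat :: 'a \<Rightarrow> nat)) (nat_copy f) \<longleftrightarrow> law1 UNIV f"
  by (auto simp: law1_def nat_copy_def)

lemma law2_nat_copy:
  fixes f :: "'a::countable \<Rightarrow> 'a \<Rightarrow> 'a"
  shows "law2 (range (to_nat :: 'a \<Rightarrow> nat)) (nat_copy f) \<longleftrightarrow> law2 UNIV f"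
  by (auto simp: law2_def nat_copy_def)

theorem mainTheorem2:
  shows "\<exists>(M :: nat set) (op :: nat \<Rightarrow> nat \<Rightarrow> nat). magma M op \<and> law1 M op \<and> \<not> law2 M op"
proof -
  have "law1 UNIV mul"
    by (simp add: law1_def mul_law)
  moreover have "\<not> law2 UNIV mul"
    unfolding law2_def using mul_Gen_not_flexible by blast
  ultimately show ?thesis
    using magma_nat_copy law1_nat_copy law2_nat_copy by blast
qed

end
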